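(* There exists an instance of the influential bandit problem (with $K=2$, $A$ symmetric positive semi-definite with $\max_{ij}|A_{ij}|\le 2$, and zero noise) on which the standard LCB algorithm incurs regret $\Omega\!\left(T^2/\log^2 T\right)$ as $T\to\infty$.
   Context: Influential bandit problem: there are $K$ arms, an unknown symmetric positive semi-definite interaction matrix $A\in\mathbb{R}^{K\times K}$ and an unknown initial loss vector $l^{(1)}\in\mathbb{R}^K$. At each round $t=1,\dots,T$ the algorithm chooses $i^{(t)}\in[K]$ based on past observations, observes $L^{(t)}=l^{(t)}_{i^{(t)}}+\xi^{(t)}$ where $\xi^{(t)}$ is zero-mean noise, and then $l^{(t+1)}_j=l^{(t)}_j+A_{i^{(t)}j}$ for all $j\in[K]$. The regret of the sequence of choices is $\sum_{t=1}^T l^{(t)}_{i^{(t)}}-\min_{(j_1,\dots,j_T)\in[K]^T}\sum_{t=1}^T l^{(t)}_{j_t}$, where in the minimum the losses evolve under the same dynamics driven by $j_1,\dots,j_T$. The standard LCB algorithm chooses $i^{(t)}=\arg\min_{i\in[K]}\big(\hat\mu_i-\sqrt{2\log t/n_i}\big)$, where $n_i$ is the number of times arm $i$ has been chosen before round $t$ and $\hat\mu_i$ is the empirical mean of its observed losses; ties are broken in favor of the smallest index, and an arm with $n_i=0$ is given score $-\infty$. (The witnessing instance in the paper is $K=2$, $A=\begin{pmatrix}1&1\\1&2\end{pmatrix}$, $l^{(1)}=(1,1)$, $\xi^{(t)}=0$.) *)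

theory Defs
  imports Complex_Main "HOL-Library.Extended_Real" "HOL-Library.FuncSet" "HOL-Library.Landau_Symbols"
begin

text \<open>Arms are 0,...,K-1. Rounds t = 1,2,...; internally index k = t - 1.
  loss_traj A l1 js k is the loss vector l^(k+1) when the arm chosen at round k+1 is js k.\<close>

fun loss_traj :: "(nat \<Rightarrow> nat \<Rightarrow> real) \<Rightarrow> (nat \<Rightarrow> real) \<Rightarrow> (nat \<Rightarrow> nat) \<Rightarrow> nat \<Rightarrow> nat \<Rightarrow> real" where
  "loss_traj A l1 js 0 = l1"
| "loss_traj A l1 js (Suc k) = (\<lambda>j. loss_traj A l1 js k j + A (js k) j)"

definition cum_loss :: "(nat \<Rightarrow> nat \<Rightarrow> real) \<Rightarrow> (nat \<Rightarrow> real) \<Rightarrow> (nat \<Rightarrow> nat) \<Rightarrow> nat \<Rightarrow> real" where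
  "cum_loss A l1 js T = (\<Sum>k<T. loss_traj A l1 js k (js k))"

definition regret :: "nat \<Rightarrow> (nat \<Rightarrow> nat \<Rightarrow> real) \<Rightarrow> (nat \<Rightarrow> real) \<Rightarrow> (nat \<Rightarrow> nat) \<Rightarrow> nat \<Rightarrow> real" where
  "regret K A l1 js T = cum_loss A l1 js T
     - Min ((\<lambda>js'. cum_loss A l1 js' T) ` ({..<T} \<rightarrow>\<^sub>E {..<K}))"

definition lcb_score :: "nat \<Rightarrow> nat \<Rightarrow> real \<Rightarrow> ereal" where
  "lcb_score t n s = (if n = 0 then -\<infinity> else ereal (s / real n - sqrt (2 * ln (real t) / real n)))"

definition lcb_select :: "nat \<Rightarrow> nat \<Rightarrow> (nat \<Rightarrow> nat) \<Rightarrow> (nat \<Rightarrow> real) \<Rightarrow> nat" where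
  "lcb_select K t n s = (LEAST i. i < K \<and> (\<forall>j<K. lcb_score t (n i) (s i) \<le> lcb_score t (n j) (s j)))"

text \<open>State after k rounds: current loss vector, pull counts, sums of observed losses.
  xi t is the noise at round t.\<close>
fun lcb_state :: "nat \<Rightarrow> (nat \<Rightarrow> nat \<Rightarrow> real) \<Rightarrow> (nat \<Rightarrow> real) \<Rightarrow> (nat \<Rightarrow> real) \<Rightarrow> nat
    \<Rightarrow> (nat \<Rightarrow> real) \<times> (nat \<Rightarrow> nat) \<times> (nat \<Rightarrow> real)" where
  "lcb_state K A l1 xi 0 = (l1, \<lambda>_. 0, \<lambda>_. 0)"
| "lcb_state K A l1 xi (Suc k) = (case lcb_state K A l1 xi k of (l, n, s) \<Rightarrow>
     (let i = lcb_select K (Suc k) n s; L = l i + xi (Suc k) in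
      (\<lambda>j. l j + A i j, n(i := n i + 1), s(i := s i + L))))"

definition lcb_choice :: "nat \<Rightarrow> (nat \<Rightarrow> nat \<Rightarrow> real) \<Rightarrow> (nat \<Rightarrow> real) \<Rightarrow> (nat \<Rightarrow> real) \<Rightarrow> nat \<Rightarrow> nat" where
  "lcb_choice K A l1 xi k = (case lcb_state K A l1 xi k of (l, n, s) \<Rightarrow> lcb_select K (Suc k) n s)"

definition lcb_regret :: "nat \<Rightarrow> (nat \<Rightarrow> nat \<Rightarrow> real) \<Rightarrow> (nat \<Rightarrow> real) \<Rightarrow> (nat \<Rightarrow> real) \<Rightarrow> nat \<Rightarrow> real" where
  "lcb_regret K A l1 xi T = regret K A l1 (lcb_choice K A l1 xi) T"

end

theory Submission
  imports Defs "HOL-Real_Asymp.Real_Asymp"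
begin

text \<open>On the instance \<open>A = [[1,1],[1,2]]\<close>, \<open>l1 = 0\<close>, arm 0 costs \<open>k\<close> in round \<open>k + 1\<close> whatever was
  played, while arm 1 costs \<open>k + m\<close> after \<open>m\<close> pulls of it. Always playing arm 0 is therefore
  optimal, and a sequence pulling arm 1 \<open>m\<close> times has regret \<open>m (m - 1) / 2\<close>.
  LCB nevertheless pulls arm 1 \<open>\<Omega>(T / log T)\<close> times: when it prefers arm 0 after \<open>n0\<close> pulls of it,
  either the exploration bonus of arm 0 is at most 2 or \<open>n0 < m\<close>, and in both cases the empirical
  mean \<open>(n0 - 1) / 2\<close> of arm 0 forces \<open>n0 \<le> 2 \<mu>1 + 6\<close>. Feeding this into the losses observed
  on arm 1 keeps its empirical mean \<open>\<mu>1\<close> of order \<open>m log m\<close>, so \<open>T = n0 + m = O(m log T)\<close>.\<close>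

section \<open>The LCB state, componentwise\<close>

definition lcb_losses :: "nat \<Rightarrow> (nat \<Rightarrow> nat \<Rightarrow> real) \<Rightarrow> (nat \<Rightarrow> real) \<Rightarrow> (nat \<Rightarrow> real) \<Rightarrow> nat \<Rightarrow> nat \<Rightarrow> real"
  where "lcb_losses K A l1 xi k = fst (lcb_state K A l1 xi k)"

definition lcb_counts :: "nat \<Rightarrow> (nat \<Rightarrow> nat \<Rightarrow> real) \<Rightarrow> (nat \<Rightarrow> real) \<Rightarrow> (nat \<Rightarrow> real) \<Rightarrow> nat \<Rightarrow> nat \<Rightarrow> nat"
  where "lcb_counts K A l1 xi k = fst (snd (lcb_state K A l1 xi k))"

definition lcb_sums :: "nat \<Rightarrow> (nat \<Rightarrow> nat \<Rightarrow> real) \<Rightarrow> (nat \<Rightarrow> real) \<Rightarrow> (nat \<Rightarrow> real) \<Rightarrow> nat \<Rightarrow> nat \<Rightarrow> real"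
  where "lcb_sums K A l1 xi k = snd (snd (lcb_state K A l1 xi k))"

lemma lcb_choice_eq_select:
  "lcb_choice K A l1 xi k = lcb_select K (Suc k) (lcb_counts K A l1 xi k) (lcb_sums K A l1 xi k)"
  by (simp add: lcb_choice_def lcb_counts_def lcb_sums_def split_beta)

lemma lcb_components_0:
  "lcb_losses K A l1 xi 0 = l1" "lcb_counts K A l1 xi 0 = (\<lambda>_. 0)" "lcb_sums K A l1 xi 0 = (\<lambda>_. 0)"
  by (simp_all add: lcb_losses_def lcb_counts_def lcb_sums_def)

lemma lcb_components_Suc:
  fixes K A l1 xi k
  defines "i \<equiv> lcb_choice K A l1 xi k"
  shows "lcb_losses K A l1 xi (Suc k) = (\<lambda>j. lcb_losses K A l1 xi k j + A i j)"
    and "lcb_counts K A l1 xi (Suc k) = (lcb_counts K A l1 xi k)(i := lcb_counts K A l1 xi k i + 1)"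
    and "lcb_sums K A l1 xi (Suc k) =
           (lcb_sums K A l1 xi k)(i := lcb_sums K A l1 xi k i + lcb_losses K A l1 xi k i + xi (Suc k))"
  unfolding i_def lcb_choice_eq_select
  by (simp_all add: lcb_losses_def lcb_counts_def lcb_sums_def split_beta Let_def add.assoc)

lemma lcb_losses_eq_loss_traj:
  "lcb_losses K A l1 xi k = loss_traj A l1 (lcb_choice K A l1 xi) k"
  by (induction k) (simp_all add: lcb_components_0 lcb_components_Suc)

lemma card_less_Suc_filter:
  "card {j. j < Suc k \<and> P j} = card {j. j < k \<and> P j} + (if P k then 1 else 0)"
proof -
  have "{j. j < Suc k \<and> P j} = {j. j < k \<and> P j} \<union> (if P k then {k} else {})"
    by (auto simp: less_Suc_eq)
  then show ?thesis by simp
qed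

lemma lcb_counts_eq_card:
  "lcb_counts K A l1 xi k i = card {j. j < k \<and> lcb_choice K A l1 xi j = i}"
  by (induction k) (auto simp: lcb_components_0 lcb_components_Suc card_less_Suc_filter)

lemma lcb_select_two_arms:
  "lcb_select 2 t n s = (if lcb_score t (n 0) (s 0) \<le> lcb_score t (n 1) (s 1) then 0 else 1)"
proof -
  have two_arms: "(\<forall>j<(2::nat). P j) \<longleftrightarrow> P 0 \<and> P 1" for P
    by (auto simp: numeral_2_eq_2 less_Suc_eq)
  show ?thesis
    unfolding lcb_select_def
    by (rule Least_equality) (auto simp: two_arms not_le less_Suc_eq numeral_2_eq_2)
qed

lemma regret_ge_cum_loss_diff:
  assumes "js' \<in> {..<T} \<rightarrow>\<^sub>E {..<K}"
  shows "cum_loss A l1 js T - cum_loss A l1 js' T \<le> regret K A l1 js T"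
proof -
  have "Min ((\<lambda>js'. cum_loss A l1 js' T) ` ({..<T} \<rightarrow>\<^sub>E {..<K})) \<le> cum_loss A l1 js' T"
    using assms by (intro Min_le) (auto simp: finite_PiE)
  then show ?thesis unfolding regret_def by simp
qed

section \<open>The witnessing instance\<close>

definition witness_A :: "nat \<Rightarrow> nat \<Rightarrow> real" where
  "witness_A i j = (if i = 1 \<and> j = 1 then 2 else 1)"

abbreviation pulls_of_arm1 :: "(nat \<Rightarrow> nat) \<Rightarrow> nat \<Rightarrow> nat" where
  "pulls_of_arm1 js k \<equiv> card {j. j < k \<and> js j = 1}"

lemma loss_traj_witness:
  "loss_traj witness_A (\<lambda>_. 0) js k j = real k + (if j = 1 then real (pulls_of_arm1 js k) else 0)"
  by (induction k) (auto simp: witness_A_def card_less_Suc_filter)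

lemma cum_loss_witness:
  "cum_loss witness_A (\<lambda>_. 0) js T =
     (\<Sum>k<T. real k) + real (pulls_of_arm1 js T) * (real (pulls_of_arm1 js T) - 1) / 2"
  by (induction T) (auto simp: cum_loss_def loss_traj_witness card_less_Suc_filter field_simps)

lemma regret_witness_ge:
  "real (pulls_of_arm1 js T) * (real (pulls_of_arm1 js T) - 1) / 2 \<le> regret 2 witness_A (\<lambda>_. 0) js T"
proof -
  let ?arm0 = "restrict (\<lambda>_. 0::nat) {..<T}"
  have "cum_loss witness_A (\<lambda>_. 0) js T - cum_loss witness_A (\<lambda>_. 0) ?arm0 T
          \<le> regret 2 witness_A (\<lambda>_. 0) js T"
    by (rule regret_ge_cum_loss_diff) auto
  moreover have no_pulls: "pulls_of_arm1 ?arm0 T = 0" by auto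
  ultimately show ?thesis
    unfolding cum_loss_witness no_pulls by simp
qed

section \<open>LCB on the witnessing instance\<close>

lemma ln_add_one_diff_ge:
  fixes x :: real
  assumes "0 < x"
  shows "1 / (x + 1) \<le> ln (x + 1) - ln x"
proof -
  have "ln (x / (x + 1)) \<le> x / (x + 1) - 1"
    using assms by (intro ln_le_minus_one) simp
  also have "\<dots> = - 1 / (x + 1)"
    using assms by (simp add: field_simps)
  finally show ?thesis
    using assms by (simp add: ln_divide_pos)
qed

lemma mean_bound_step:
  fixes m :: nat and S n0 :: real
  assumes "1 \<le> m" and "0 \<le> S"
    and S: "S \<le> real m * (real m + 1) * (1/2 + 3 * ln (real m))"
    and n0: "n0 \<le> 2 * S / real m + 6"
  shows "S + n0 + 2 * real m \<le> (real m + 1) * (real m + 2) * (1/2 + 3 * ln (real m + 1))"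
proof -
  define B where "B = 1/2 + 3 * ln (real m)"
  have m: "0 < real m" using assms(1) by simp
  have "S * (real m + 2) / real m \<le> real m * (real m + 1) * B * (real m + 2) / real m"
    using S m unfolding B_def by (intro divide_right_mono mult_right_mono) auto
  also have "\<dots> = (real m + 1) * (real m + 2) * B"
    using m by simp
  finally have mean: "S * (real m + 2) / real m \<le> (real m + 1) * (real m + 2) * B" .
  have "2 * real m + 6 \<le> 3 * (real m + 1) * (real m + 2) * (1 / (real m + 1))"
    using m by (simp add: field_simps)
  also have "\<dots> \<le> 3 * (real m + 1) * (real m + 2) * (ln (real m + 1) - ln (real m))"
    using ln_add_one_diff_ge[OF m] m by (intro mult_left_mono) auto
  finally have log_gain: "2 * real m + 6 \<le> 3 * (real m + 1) * (real m + 2) * (ln (real m + 1) - ln (real m))" .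
  have "S + n0 + 2 * real m \<le> S * (real m + 2) / real m + 2 * real m + 6"
    using n0 m by (simp add: field_simps)
  with mean log_gain show ?thesis
    unfolding B_def by (simp add: algebra_simps)
qed

lemma lcb_prefers_arm0_bound:
  fixes n0 m :: nat and S0 S1 :: real
  assumes score: "lcb_score (Suc (n0 + m)) n0 S0 \<le> lcb_score (Suc (n0 + m)) m S1"
    and "1 \<le> m" and S0: "real n0 * (real n0 - 1) / 2 \<le> S0" and S1: "real m * (real m - 1) \<le> S1"
  shows "real n0 + 1 \<le> 2 * S1 / real m + 6"
proof -
  define \<mu> where "\<mu> = S1 / real m"
  have m: "0 < real m" using \<open>1 \<le> m\<close> by simp
  have "real m - 1 \<le> \<mu>"
    using S1 m unfolding \<mu>_def by (simp add: field_simps)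
  show ?thesis
  proof (cases "n0 = 0")
    case False
    define w where "w = sqrt (2 * ln (real (Suc (n0 + m))) / real n0)"
    have n0: "0 < real n0" using False by simp
    have "S0 / real n0 - w \<le> \<mu> - sqrt (2 * ln (real (Suc (n0 + m))) / real m)"
      using score False \<open>1 \<le> m\<close> unfolding lcb_score_def w_def \<mu>_def by simp
    moreover have "0 \<le> sqrt (2 * ln (real (Suc (n0 + m))) / real m)" by simp
    ultimately have "S0 / real n0 - w \<le> \<mu>" by linarith
    moreover have "real n0 - 1 \<le> 2 * (S0 / real n0)"
      using S0 n0 by (simp add: field_simps)
    ultimately have "real n0 - 1 \<le> 2 * \<mu> + 2 * w" by linarith
    show ?thesis
    proof (cases "w \<le> 2")
      case False
      \<comment> \<open>a wide confidence interval forces few pulls of arm 0, since the log of the round number is small\<close>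
      then have "sqrt 4 < w" by simp
      then have "4 < 2 * ln (real (Suc (n0 + m))) / real n0"
        unfolding w_def real_sqrt_less_iff .
      then have "4 * real n0 < 2 * ln (real (Suc (n0 + m)))"
        using n0 by (simp add: field_simps)
      moreover have "ln (real (Suc (n0 + m))) \<le> real (n0 + m)"
        using ln_le_minus_one[of "real (Suc (n0 + m))"] by simp
      ultimately have "real n0 < real m" by simp
      then show ?thesis using \<open>real m - 1 \<le> \<mu>\<close> unfolding \<mu>_def by linarith
    qed (use \<open>real n0 - 1 \<le> 2 * \<mu> + 2 * w\<close> in \<open>simp add: \<mu>_def\<close>)
  qed (use \<open>real m - 1 \<le> \<mu>\<close> in \<open>simp add: \<mu>_def\<close>)
qed

text \<open>Here \<open>n0\<close> and \<open>m\<close> are the numbers of pulls of arms 0 and 1 and \<open>S0\<close>, \<open>S1\<close> the sums of their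
  observed losses, so in round \<open>n0 + m + 1\<close> arm 0 has loss \<open>n0 + m\<close> and arm 1 has loss \<open>n0 + 2 m\<close>.\<close>

definition witness_lcb_inv :: "nat \<Rightarrow> nat \<Rightarrow> real \<Rightarrow> real \<Rightarrow> bool" where
  "witness_lcb_inv n0 m S0 S1 \<longleftrightarrow>
     real n0 * (real n0 - 1) / 2 \<le> S0 \<and>
     real m * (real m - 1) \<le> S1 \<and>
     S1 \<le> real m * (real (n0 + m) - 1) \<and>
     S1 \<le> real m * (real m + 1) * (1/2 + 3 * ln (real m)) \<and>
     (m = 0 \<longrightarrow> n0 \<le> 1) \<and>
     (1 \<le> m \<longrightarrow> real n0 \<le> 2 * S1 / real m + 6)"

lemma witness_lcb_inv_pull_arm0:
  assumes inv: "witness_lcb_inv n0 m S0 S1"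
    and score: "lcb_score (Suc (n0 + m)) n0 S0 \<le> lcb_score (Suc (n0 + m)) m S1"
  shows "witness_lcb_inv (Suc n0) m (S0 + real (n0 + m)) S1"
proof -
  have "real (Suc n0) * (real (Suc n0) - 1) / 2 = real n0 * (real n0 - 1) / 2 + real n0"
    by (simp add: field_simps)
  moreover have "m = 0 \<Longrightarrow> n0 = 0"
    using score by (cases n0) (auto simp: lcb_score_def)
  moreover have "1 \<le> m \<Longrightarrow> real (Suc n0) \<le> 2 * S1 / real m + 6"
    using lcb_prefers_arm0_bound[OF score] inv unfolding witness_lcb_inv_def by simp
  moreover have "real m * (real (n0 + m) - 1) \<le> real m * (real (Suc n0 + m) - 1)"
    by (intro mult_left_mono) auto
  ultimately show ?thesis
    using inv unfolding witness_lcb_inv_def by auto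
qed

lemma witness_lcb_inv_pull_arm1:
  assumes inv: "witness_lcb_inv n0 m S0 S1"
  shows "witness_lcb_inv n0 (Suc m) S0 (S1 + real n0 + 2 * real m)"
proof -
  have S1: "real m * (real m - 1) \<le> S1" "S1 \<le> real m * (real (n0 + m) - 1)"
    and mean: "S1 \<le> real m * (real m + 1) * (1/2 + 3 * ln (real m))"
    and m0: "m = 0 \<longrightarrow> n0 \<le> 1" and pref: "1 \<le> m \<longrightarrow> real n0 \<le> 2 * S1 / real m + 6"
    using inv unfolding witness_lcb_inv_def by auto
  have "0 \<le> S1"
    using S1(1) by (cases m) (auto intro: order_trans[rotated])
  have "S1 + real n0 + 2 * real m \<le> real (Suc m) * (real (Suc m) + 1) * (1/2 + 3 * ln (real (Suc m)))"
  proof (cases "m = 0")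
    case True
    then show ?thesis using S1(2) \<open>0 \<le> S1\<close> m0 by simp
  next
    case False
    then have "S1 + real n0 + 2 * real m \<le> (real m + 1) * (real m + 2) * (1/2 + 3 * ln (real m + 1))"
      using mean_bound_step[OF _ \<open>0 \<le> S1\<close> mean, of "real n0"] pref by simp
    then show ?thesis by (simp add: algebra_simps)
  qed
  moreover have "real n0 \<le> 2 * (S1 + real n0 + 2 * real m) / real (Suc m) + 6"
  proof (cases "m = 0")
    case False
    \<comment> \<open>the new observation \<open>n0 + 2 m\<close> exceeds the current mean of arm 1, so the mean grows\<close>
    have "S1 \<le> real m * (real n0 + 2 * real m)"
      using S1(2) by (rule order_trans) (intro mult_left_mono, auto)
    then have "S1 * (real m + 1) \<le> (S1 + real n0 + 2 * real m) * real m"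
      by (simp add: algebra_simps)
    then have "2 * S1 / real m \<le> 2 * (S1 + real n0 + 2 * real m) / real (Suc m)"
      using False by (simp add: field_simps)
    moreover have "real n0 \<le> 2 * S1 / real m + 6" using pref False by simp
    ultimately show ?thesis by linarith
  qed (use \<open>0 \<le> S1\<close> in simp)
  ultimately show ?thesis
    using inv unfolding witness_lcb_inv_def by (simp add: algebra_simps)
qed

abbreviation witness_choice :: "nat \<Rightarrow> nat" where
  "witness_choice \<equiv> lcb_choice 2 witness_A (\<lambda>_. 0) (\<lambda>_. 0)"

abbreviation witness_counts :: "nat \<Rightarrow> nat \<Rightarrow> nat" where
  "witness_counts \<equiv> lcb_counts 2 witness_A (\<lambda>_. 0) (\<lambda>_. 0)"

abbreviation witness_sums :: "nat \<Rightarrow> nat \<Rightarrow> real" where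
  "witness_sums \<equiv> lcb_sums 2 witness_A (\<lambda>_. 0) (\<lambda>_. 0)"

lemma witness_lcb_state_inv:
  "witness_counts k 0 + witness_counts k 1 = k \<and>
   witness_lcb_inv (witness_counts k 0) (witness_counts k 1) (witness_sums k 0) (witness_sums k 1)"
proof (induction k)
  case 0
  show ?case by (simp add: lcb_components_0 witness_lcb_inv_def)
next
  case (Suc k)
  define n0 m S0 S1 where "n0 = witness_counts k 0" and "m = witness_counts k 1"
    and "S0 = witness_sums k 0" and "S1 = witness_sums k 1"
  have k: "k = n0 + m" and inv: "witness_lcb_inv n0 m S0 S1"
    using Suc.IH unfolding n0_def m_def S0_def S1_def by simp_all
  have losses: "lcb_losses 2 witness_A (\<lambda>_. 0) (\<lambda>_. 0) k i = real k + (if i = 1 then real m else 0)" for i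
    by (simp add: lcb_losses_eq_loss_traj loss_traj_witness lcb_counts_eq_card m_def)
  show ?case
  proof (cases "lcb_score (Suc k) n0 S0 \<le> lcb_score (Suc k) m S1")
    case True
    then have "witness_choice k = 0"
      by (simp add: lcb_choice_eq_select lcb_select_two_arms n0_def m_def S0_def S1_def)
    then have "witness_counts (Suc k) 0 = Suc n0" "witness_counts (Suc k) 1 = m"
      "witness_sums (Suc k) 0 = S0 + real k" "witness_sums (Suc k) 1 = S1"
      by (simp_all add: lcb_components_Suc losses n0_def m_def S0_def S1_def)
    then show ?thesis
      using witness_lcb_inv_pull_arm0[OF inv True[unfolded k]] k by simp
  next
    case False
    then have "witness_choice k = 1"
      by (simp add: lcb_choice_eq_select lcb_select_two_arms n0_def m_def S0_def S1_def)
    then have "witness_counts (Suc k) 0 = n0" "witness_counts (Suc k) 1 = Suc m"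
      "witness_sums (Suc k) 0 = S0" "witness_sums (Suc k) 1 = S1 + real k + real m"
      by (simp_all add: lcb_components_Suc losses n0_def m_def S0_def S1_def)
    then show ?thesis
      using witness_lcb_inv_pull_arm1[OF inv] k by (simp add: add.assoc)
  qed
qed

lemma witness_lcb_inv_count_bound:
  assumes inv: "witness_lcb_inv n0 m S0 S1" and "2 \<le> n0 + m"
  shows "real (n0 + m) \<le> (real m + 1) * (7 + 6 * ln (real (n0 + m)))"
proof -
  have "1 \<le> m" and mean: "S1 \<le> real m * (real m + 1) * (1/2 + 3 * ln (real m))"
    and pref: "real n0 \<le> 2 * S1 / real m + 6"
    using inv \<open>2 \<le> n0 + m\<close> unfolding witness_lcb_inv_def by auto
  then have m: "0 < real m" by simp
  have "2 * S1 / real m \<le> 2 * (real m * (real m + 1) * (1/2 + 3 * ln (real m))) / real m"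
    using mean m by (intro divide_right_mono) auto
  also have "\<dots> = (real m + 1) * (1 + 6 * ln (real m))"
    using m by (simp add: field_simps)
  also have "\<dots> \<le> (real m + 1) * (1 + 6 * ln (real (n0 + m)))"
    using m by (intro mult_left_mono) auto
  finally show ?thesis
    using pref by (simp add: algebra_simps)
qed

lemma witness_lcb_pulls_lower_bound:
  assumes "2 \<le> T"
  shows "real T \<le> (real (pulls_of_arm1 witness_choice T) + 1) * (7 + 6 * ln (real T))"
  using witness_lcb_inv_count_bound[OF conjunct2[OF witness_lcb_state_inv]] witness_lcb_state_inv assms
  by (metis lcb_counts_eq_card)

lemma witness_lcb_regret_eventually_ge:
  "\<forall>\<^sub>F T in at_top. (real T / (7 + 6 * ln (real T)) - 2)\<^sup>2 / 2 \<le> lcb_regret 2 witness_A (\<lambda>_. 0) (\<lambda>_. 0) T"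
proof -
  have "\<forall>\<^sub>F T in at_top. 2 \<le> real T / (7 + 6 * ln (real T))" by real_asymp
  moreover have "\<forall>\<^sub>F T in at_top. 2 \<le> (T::nat)" by (rule eventually_ge_at_top)
  ultimately show ?thesis
  proof eventually_elim
    case (elim T)
    define m where "m = real (pulls_of_arm1 witness_choice T)"
    define x where "x = real T / (7 + 6 * ln (real T))"
    have "0 \<le> ln (real T)" using elim by (intro ln_ge_zero) simp
    then have "x \<le> m + 1"
      using witness_lcb_pulls_lower_bound[OF \<open>2 \<le> T\<close>] unfolding m_def x_def by (simp add: field_simps)
    then have "(x - 2)\<^sup>2 \<le> m * (m - 1)"
      using elim unfolding x_def[symmetric] power2_eq_square by (intro mult_mono) auto
    then show ?case
      using regret_witness_ge[where js = witness_choice and T = T] unfolding lcb_regret_def m_def x_def[symmetric] by simp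
  qed
qed

theorem proposition2:
  shows "\<exists>(A :: nat \<Rightarrow> nat \<Rightarrow> real) (l1 :: nat \<Rightarrow> real).
     (\<forall>i<2. \<forall>j<2. A i j = A j i) \<and>
     (\<forall>x :: nat \<Rightarrow> real. (\<Sum>i<2. \<Sum>j<2. x i * A i j * x j) \<ge> 0) \<and>
     (\<forall>i<2. \<forall>j<2. \<bar>A i j\<bar> \<le> 2) \<and>
     lcb_regret 2 A l1 (\<lambda>_. 0) \<in> \<Omega>(\<lambda>T. real T ^ 2 / (ln (real T)) ^ 2)"
proof (intro exI conjI allI)
  fix x :: "nat \<Rightarrow> real"
  have "(\<Sum>i<2. \<Sum>j<2. x i * witness_A i j * x j) = (x 0 + x 1)\<^sup>2 + (x 1)\<^sup>2"
    by (simp add: numeral_2_eq_2 witness_A_def power2_eq_square algebra_simps)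
  then show "(\<Sum>i<2. \<Sum>j<2. x i * witness_A i j * x j) \<ge> 0" by simp
next
  have "(\<lambda>T. (real T / (7 + 6 * ln (real T)) - 2)\<^sup>2 / 2) \<in> \<Omega>(\<lambda>T. real T ^ 2 / (ln (real T)) ^ 2)"
    by real_asymp
  moreover have "lcb_regret 2 witness_A (\<lambda>_. 0) (\<lambda>_. 0) \<in> \<Omega>(\<lambda>T. (real T / (7 + 6 * ln (real T)) - 2)\<^sup>2 / 2)"
    using witness_lcb_regret_eventually_ge by (intro landau_omega.big_mono) (auto elim: eventually_mono)
  ultimately show "lcb_regret 2 witness_A (\<lambda>_. 0) (\<lambda>_. 0) \<in> \<Omega>(\<lambda>T. real T ^ 2 / (ln (real T)) ^ 2)"
    using landau_omega.big_trans by blast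
qed (auto simp: witness_A_def)

end
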